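(* The following problem (\textsc{MSO/DMS-MC}) is undecidable: given a database-manipulating system (DMS) $\mathcal{S}$ and an MSO-FO sentence $\phi$ over the schema of $\mathcal{S}$, decide whether $\rho \models \phi$ for every run $\rho \in \textsf{Runs}(\mathcal{S})$.
   Context: Fix a countably infinite data domain $\Delta$. A relational schema $\mathcal{R}$ is a finite set of relation names $R/a$ with arities $a\ge 0$. A database instance over $\mathcal{R}$ and a set $D$ is a finite set of facts $R(e_1,\dots,e_a)$ with $R/a\in\mathcal{R}$ and $e_i\in D$; a nullary relation $p/0$ is "true" in $I$ iff $p\in I$. The active domain $\mathrm{adom}(I)$ is the set of elements of $\Delta$ occurring in facts of $I$. A $\mathrm{FOL}(\mathcal{R})$ query is a first-order formula with equality over $\mathcal{R}$ (atoms $\mathsf{true}$, $R(u_1,\dots,u_a)$, $u_1=u_2$; connectives $\neg,\wedge$; quantifier $\exists u$), evaluated with active-domain semantics: $\exists u$ ranges over $\mathrm{adom}(I)$; $I,\sigma\models Q$ denotes satisfaction under a substitution $\sigma$ of the free variables. For an instance $I$ whose arguments are variables and a substitution $\sigma$ of these variables into $\Delta$, $\sigma(I)$ denotes the instance obtained by replacing each variable $u$ by $\sigma(u)$. A DMS over $\Delta$ and $\mathcal{R}$ is a pair $\mathcal{S}=\langle I_0,\textsc{acts}\rangle$ where $I_0$ is an instance with $\mathrm{adom}(I_0)=\emptyset$ (it only fixes truth values of nullary relations) and $\textsc{acts}$ is a finite set of actions $\alpha=\langle \vec u,\vec v,Q,\mathit{Del},\mathit{Add}\rangle$: $\vec u,\vec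 v$ are disjoint finite sets of data variables (action parameters and fresh-input variables), $Q$ is a $\mathrm{FOL}(\mathcal{R})$ query whose free variables are exactly $\vec u$, $\mathit{Del}$ is an instance over $\mathcal{R}$ with arguments in $\vec u$, and $\mathit{Add}$ is an instance over $\mathcal{R}$ with arguments in $\vec u\cup\vec v$ in which every variable of $\vec v$ occurs. Configurations are pairs $\langle I,H\rangle$ with $I$ an instance over $\mathcal{R},\Delta$ and $H\subseteq\Delta$ (history set). There is a transition $\langle I,H\rangle\xrightarrow{\alpha:\sigma}\langle I',H'\rangle$ iff $\sigma:\vec u\cup\vec v\to\Delta$ satisfies: $\sigma(u)\in\mathrm{adom}(I)$ for $u\in\vec u$; $\sigma(v)\notin H$ for $v\in\vec v$; $\sigma$ is injective on $\vec v$; $I,\sigma|_{\vec u}\models Q$; $I'=(I\setminus\sigma(\mathit{Del}))\cup\sigma(\mathit{Add})$; and $H'=H\cup\{\sigma(v)\mid v\in\vec v\}$. An extended run is an infinite sequence $\langle I_0,H_0\rangle\xrightarrow{\alpha_0:\sigma_0}\langle I_1,H_1\rangle\xrightarrow{\alpha_1:\sigma_1}\cdots$ with $H_0=\emptyset$; the run it generates is $I_0,I_1,I_2,\dots$; $\textsf{Runs}(\mathcal{S})$ is the set of all runs. MSO-FO formulae over $\mathcal{R}$: $\phi ::= Q@x \mid x<y \mid x\in X \mid \neg\phi \mid \phi\wedge\phi \mid \exists x.\phi \mid \exists X.\phi \mid \exists^g u.\phi$, where $x,y$ are first-order position variables (ranging over $\mathbb{N}$), $X$ is a second-order position variable (ranging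 over subsets of $\mathbb{N}$), $u$ is a data variable and $Q$ is a $\mathrm{FOL}(\mathcal{R})$ query. Over a run $\rho=I_0,I_1,\dots$ with $\mathrm{gadom}(\rho)=\bigcup_i\mathrm{adom}(I_i)$: $\rho,\sigma\models Q@x$ iff, with $i=\sigma(x)$, the values $\sigma$ assigns to the free variables of $Q$ lie in $\mathrm{adom}(I_i)$ and $I_i,\sigma|_{\mathrm{free}(Q)}\models Q$; $x<y$ and $x\in X$ are interpreted naturally on $\mathbb{N}$; $\exists^g u.\phi$ holds iff there is $e\in\mathrm{gadom}(\rho)$ with $\phi$ holding when $u\mapsto e$; the remaining cases are standard. A sentence has no free variables. *)

theory Defs
  imports Main "HOL-Library.Nat_Bijection"
begin

datatype recf = RZ | RS | RId nat | RCn recf "recf list" | RPr recf recf | RMn recf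

inductive rf_eval :: "recf \<Rightarrow> nat list \<Rightarrow> nat \<Rightarrow> bool" where
  zero: "rf_eval RZ xs 0"
| succ: "rf_eval RS (x # xs) (Suc x)"
| proj: "i < length xs \<Longrightarrow> rf_eval (RId i) xs (xs ! i)"
| comp: "list_all2 (\<lambda>g y. rf_eval g xs y) gs ys \<Longrightarrow> rf_eval f ys y \<Longrightarrow> rf_eval (RCn f gs) xs y"
| pr0: "rf_eval f xs y \<Longrightarrow> rf_eval (RPr f g) (0 # xs) y"
| prS: "rf_eval (RPr f g) (n # xs) z \<Longrightarrow> rf_eval g (z # n # xs) y \<Longrightarrow> rf_eval (RPr f g) (Suc n # xs) y"
| mn: "rf_eval f (n # xs) 0 \<Longrightarrow> (\<forall>m<n. \<exists>y. rf_eval f (m # xs) y \<and> y \<noteq> 0) \<Longrightarrow> rf_eval (RMn f) xs n"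

definition decidable_on :: "('a \<Rightarrow> bool) \<Rightarrow> ('a \<Rightarrow> bool) \<Rightarrow> ('a \<Rightarrow> nat) \<Rightarrow> bool" where
  "decidable_on adm P enc \<longleftrightarrow>
     (\<exists>r. \<forall>x. adm x \<longrightarrow> rf_eval r [enc x] (if P x then 1 else 0))"

type_synonym fact = "nat \<times> nat list"   \<comment> \<open>relation name, arguments\<close>
type_synonym inst = "fact set"
type_synonym schema = "(nat \<times> nat) list" \<comment> \<open>relation name, arity\<close>

definition adom :: "inst \<Rightarrow> nat set" where
  "adom I = (\<Union>(r, args)\<in>I. set args)"

datatype fol = FTrue | FAtom nat "nat list" | FEq nat nat | FNot fol | FAnd fol fol | FEx nat fol

fun fol_holds :: "inst \<Rightarrow> (nat \<Rightarrow> nat) \<Rightarrow> fol \<Rightarrow> bool" where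
  "fol_holds I \<sigma> FTrue = True"
| "fol_holds I \<sigma> (FAtom r us) = ((r, map \<sigma> us) \<in> I)"
| "fol_holds I \<sigma> (FEq u v) = (\<sigma> u = \<sigma> v)"
| "fol_holds I \<sigma> (FNot q) = (\<not> fol_holds I \<sigma> q)"
| "fol_holds I \<sigma> (FAnd q1 q2) = (fol_holds I \<sigma> q1 \<and> fol_holds I \<sigma> q2)"
| "fol_holds I \<sigma> (FEx u q) = (\<exists>e\<in>adom I. fol_holds I (\<sigma>(u := e)) q)"

fun fol_fv :: "fol \<Rightarrow> nat set" where
  "fol_fv FTrue = {}"
| "fol_fv (FAtom r us) = set us"
| "fol_fv (FEq u v) = {u, v}"
| "fol_fv (FNot q) = fol_fv q"
| "fol_fv (FAnd q1 q2) = fol_fv q1 \<union> fol_fv q2"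
| "fol_fv (FEx u q) = fol_fv q - {u}"

fun fol_over :: "schema \<Rightarrow> fol \<Rightarrow> bool" where
  "fol_over R FTrue = True"
| "fol_over R (FAtom r us) = ((r, length us) \<in> set R)"
| "fol_over R (FEq u v) = True"
| "fol_over R (FNot q) = fol_over R q"
| "fol_over R (FAnd q1 q2) = (fol_over R q1 \<and> fol_over R q2)"
| "fol_over R (FEx u q) = fol_over R q"

datatype action = Action
  (a_params: "nat list") (a_fresh: "nat list") (a_query: fol)
  (a_del: "fact list") (a_add: "fact list")

text \<open>A DMS: schema, the nullary relations true initially (so adom I0 is empty), actions.\<close>
datatype dms = DMS (d_schema: schema) (d_init: "nat list") (d_acts: "action list")

definition fact_over :: "schema \<Rightarrow> fact \<Rightarrow> bool" where
  "fact_over R f \<longleftrightarrow> (fst f, length (snd f)) \<in> set R"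

definition wf_action :: "schema \<Rightarrow> action \<Rightarrow> bool" where
  "wf_action R a \<longleftrightarrow>
     set (a_params a) \<inter> set (a_fresh a) = {} \<and>
     fol_over R (a_query a) \<and> fol_fv (a_query a) = set (a_params a) \<and>
     (\<forall>f\<in>set (a_del a). fact_over R f \<and> set (snd f) \<subseteq> set (a_params a)) \<and>
     (\<forall>f\<in>set (a_add a). fact_over R f \<and> set (snd f) \<subseteq> set (a_params a) \<union> set (a_fresh a)) \<and>
     (\<forall>v\<in>set (a_fresh a). \<exists>f\<in>set (a_add a). v \<in> set (snd f))"

definition wf_dms :: "dms \<Rightarrow> bool" where
  "wf_dms S \<longleftrightarrow> distinct (map fst (d_schema S)) \<and>
     (\<forall>p\<in>set (d_init S). (p, 0) \<in> set (d_schema S)) \<and>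
     (\<forall>a\<in>set (d_acts S). wf_action (d_schema S) a)"

definition init_inst :: "dms \<Rightarrow> inst" where
  "init_inst S = (\<lambda>p. (p, [])) ` set (d_init S)"

definition subst_inst :: "(nat \<Rightarrow> nat) \<Rightarrow> fact list \<Rightarrow> inst" where
  "subst_inst \<sigma> F = (\<lambda>(r, args). (r, map \<sigma> args)) ` set F"

definition dms_step :: "dms \<Rightarrow> inst \<times> nat set \<Rightarrow> inst \<times> nat set \<Rightarrow> bool" where
  "dms_step S c c' \<longleftrightarrow> (\<exists>a\<in>set (d_acts S). \<exists>\<sigma>.
      (\<forall>u\<in>set (a_params a). \<sigma> u \<in> adom (fst c)) \<and>
      (\<forall>v\<in>set (a_fresh a). \<sigma> v \<notin> snd c) \<and>
      inj_on \<sigma> (set (a_fresh a)) \<and>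
      fol_holds (fst c) \<sigma> (a_query a) \<and>
      fst c' = (fst c - subst_inst \<sigma> (a_del a)) \<union> subst_inst \<sigma> (a_add a) \<and>
      snd c' = snd c \<union> \<sigma> ` set (a_fresh a))"

definition is_run :: "dms \<Rightarrow> (nat \<Rightarrow> inst) \<Rightarrow> bool" where
  "is_run S \<rho> \<longleftrightarrow> (\<exists>H. H 0 = {} \<and> \<rho> 0 = init_inst S \<and>
      (\<forall>i. dms_step S (\<rho> i, H i) (\<rho> (Suc i), H (Suc i))))"

text \<open>Position variables, set variables and data variables are each named by nat
  (separate name spaces).\<close>
datatype mso = MQAt fol nat | MLess nat nat | MMem nat nat | MNot mso | MAnd mso mso
  | MExPos nat mso | MExSet nat mso | MExG nat mso

definition gadom :: "(nat \<Rightarrow> inst) \<Rightarrow> nat set" where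
  "gadom \<rho> = (\<Union>i. adom (\<rho> i))"

fun mso_holds :: "(nat \<Rightarrow> inst) \<Rightarrow> (nat \<Rightarrow> nat) \<Rightarrow> (nat \<Rightarrow> nat) \<Rightarrow> (nat \<Rightarrow> nat set) \<Rightarrow> mso \<Rightarrow> bool" where
  "mso_holds \<rho> \<xi> \<pi> \<Pi> (MQAt q x) =
     ((\<forall>u\<in>fol_fv q. \<xi> u \<in> adom (\<rho> (\<pi> x))) \<and> fol_holds (\<rho> (\<pi> x)) \<xi> q)"
| "mso_holds \<rho> \<xi> \<pi> \<Pi> (MLess x y) = (\<pi> x < \<pi> y)"
| "mso_holds \<rho> \<xi> \<pi> \<Pi> (MMem x X) = (\<pi> x \<in> \<Pi> X)"
| "mso_holds \<rho> \<xi> \<pi> \<Pi> (MNot \<phi>) = (\<not> mso_holds \<rho> \<xi> \<pi> \<Pi> \<phi>)"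
| "mso_holds \<rho> \<xi> \<pi> \<Pi> (MAnd \<phi> \<psi>) = (mso_holds \<rho> \<xi> \<pi> \<Pi> \<phi> \<and> mso_holds \<rho> \<xi> \<pi> \<Pi> \<psi>)"
| "mso_holds \<rho> \<xi> \<pi> \<Pi> (MExPos x \<phi>) = (\<exists>i. mso_holds \<rho> \<xi> (\<pi>(x := i)) \<Pi> \<phi>)"
| "mso_holds \<rho> \<xi> \<pi> \<Pi> (MExSet X \<phi>) = (\<exists>A. mso_holds \<rho> \<xi> \<pi> (\<Pi>(X := A)) \<phi>)"
| "mso_holds \<rho> \<xi> \<pi> \<Pi> (MExG u \<phi>) = (\<exists>e\<in>gadom \<rho>. mso_holds \<rho> (\<xi>(u := e)) \<pi> \<Pi> \<phi>)"

fun mso_dfv :: "mso \<Rightarrow> nat set" where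
  "mso_dfv (MQAt q x) = fol_fv q"
| "mso_dfv (MLess x y) = {}"
| "mso_dfv (MMem x X) = {}"
| "mso_dfv (MNot \<phi>) = mso_dfv \<phi>"
| "mso_dfv (MAnd \<phi> \<psi>) = mso_dfv \<phi> \<union> mso_dfv \<psi>"
| "mso_dfv (MExPos x \<phi>) = mso_dfv \<phi>"
| "mso_dfv (MExSet X \<phi>) = mso_dfv \<phi>"
| "mso_dfv (MExG u \<phi>) = mso_dfv \<phi> - {u}"

fun mso_pfv :: "mso \<Rightarrow> nat set" where
  "mso_pfv (MQAt q x) = {x}"
| "mso_pfv (MLess x y) = {x, y}"
| "mso_pfv (MMem x X) = {x}"
| "mso_pfv (MNot \<phi>) = mso_pfv \<phi>"
| "mso_pfv (MAnd \<phi> \<psi>) = mso_pfv \<phi> \<union> mso_pfv \<psi>"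
| "mso_pfv (MExPos x \<phi>) = mso_pfv \<phi> - {x}"
| "mso_pfv (MExSet X \<phi>) = mso_pfv \<phi>"
| "mso_pfv (MExG u \<phi>) = mso_pfv \<phi>"

fun mso_sfv :: "mso \<Rightarrow> nat set" where
  "mso_sfv (MQAt q x) = {}"
| "mso_sfv (MLess x y) = {}"
| "mso_sfv (MMem x X) = {X}"
| "mso_sfv (MNot \<phi>) = mso_sfv \<phi>"
| "mso_sfv (MAnd \<phi> \<psi>) = mso_sfv \<phi> \<union> mso_sfv \<psi>"
| "mso_sfv (MExPos x \<phi>) = mso_sfv \<phi>"
| "mso_sfv (MExSet X \<phi>) = mso_sfv \<phi> - {X}"
| "mso_sfv (MExG u \<phi>) = mso_sfv \<phi>"

definition mso_sentence :: "mso \<Rightarrow> bool" where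
  "mso_sentence \<phi> \<longleftrightarrow> mso_dfv \<phi> = {} \<and> mso_pfv \<phi> = {} \<and> mso_sfv \<phi> = {}"

fun mso_over :: "schema \<Rightarrow> mso \<Rightarrow> bool" where
  "mso_over R (MQAt q x) = fol_over R q"
| "mso_over R (MLess x y) = True"
| "mso_over R (MMem x X) = True"
| "mso_over R (MNot \<phi>) = mso_over R \<phi>"
| "mso_over R (MAnd \<phi> \<psi>) = (mso_over R \<phi> \<and> mso_over R \<psi>)"
| "mso_over R (MExPos x \<phi>) = mso_over R \<phi>"
| "mso_over R (MExSet X \<phi>) = mso_over R \<phi>"
| "mso_over R (MExG u \<phi>) = mso_over R \<phi>"

definition mc_input :: "dms \<times> mso \<Rightarrow> bool" where
  "mc_input x \<longleftrightarrow> wf_dms (fst x) \<and> mso_sentence (snd x) \<and> mso_over (d_schema (fst x)) (snd x)"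

text \<open>Yes-instances: every run satisfies the sentence (valuations irrelevant for sentences).\<close>
definition mc_yes :: "dms \<times> mso \<Rightarrow> bool" where
  "mc_yes x \<longleftrightarrow> (\<forall>\<rho>. is_run (fst x) \<rho> \<longrightarrow> mso_holds \<rho> (\<lambda>_. 0) (\<lambda>_. 0) (\<lambda>_. {}) (snd x))"

fun enc_fol :: "fol \<Rightarrow> nat" where
  "enc_fol FTrue = prod_encode (0, 0)"
| "enc_fol (FAtom r us) = prod_encode (1, prod_encode (r, list_encode us))"
| "enc_fol (FEq u v) = prod_encode (2, prod_encode (u, v))"
| "enc_fol (FNot q) = prod_encode (3, enc_fol q)"
| "enc_fol (FAnd q1 q2) = prod_encode (4, prod_encode (enc_fol q1, enc_fol q2))"
| "enc_fol (FEx u q) = prod_encode (5, prod_encode (u, enc_fol q))"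

definition enc_fact :: "fact \<Rightarrow> nat" where
  "enc_fact f = prod_encode (fst f, list_encode (snd f))"

definition enc_action :: "action \<Rightarrow> nat" where
  "enc_action a = list_encode [list_encode (a_params a), list_encode (a_fresh a),
     enc_fol (a_query a), list_encode (map enc_fact (a_del a)), list_encode (map enc_fact (a_add a))]"

definition enc_dms :: "dms \<Rightarrow> nat" where
  "enc_dms S = list_encode [list_encode (map prod_encode (d_schema S)), list_encode (d_init S),
     list_encode (map enc_action (d_acts S))]"

fun enc_mso :: "mso \<Rightarrow> nat" where
  "enc_mso (MQAt q x) = prod_encode (0, prod_encode (enc_fol q, x))"
| "enc_mso (MLess x y) = prod_encode (1, prod_encode (x, y))"
| "enc_mso (MMem x X) = prod_encode (2, prod_encode (x, X))"
| "enc_mso (MNot \<phi>) = prod_encode (3, enc_mso \<phi>)"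
| "enc_mso (MAnd \<phi> \<psi>) = prod_encode (4, prod_encode (enc_mso \<phi>, enc_mso \<psi>))"
| "enc_mso (MExPos x \<phi>) = prod_encode (5, prod_encode (x, enc_mso \<phi>))"
| "enc_mso (MExSet X \<phi>) = prod_encode (6, prod_encode (X, enc_mso \<phi>))"
| "enc_mso (MExG u \<phi>) = prod_encode (7, prod_encode (u, enc_mso \<phi>))"

definition enc_input :: "dms \<times> mso \<Rightarrow> nat" where
  "enc_input x = prod_encode (enc_dms (fst x), enc_mso (snd x))"

end

theory Submission
  imports Defs "HOL-Library.Countable"
begin

(* A diagonal argument. A run of a DMS can create one fresh element per step and record arbitrary
  facts; identifying each element with the step that created it, an MSO-FO sentence can speak
  about natural numbers (zero, successor, order) and so express that every recorded fact
  R_{g,l}(xs, y) is justified by the defining clause of the partial recursive function g.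
  Justified facts are true graph facts, and some run records all true graph facts. Hence the
  sentence "if the recorded facts are justified, then R_t(K, M, 1) is not recorded" holds on all
  runs iff t(K, M) \<noteq> 1.
  Given a decider r, let t compute from K and M the code of the input consisting of this sentence
  and of the DMS, and apply r to it. Taking for K and M the codes of the sentence body and of
  the DMS, t(K, M) = 1 iff r accepts the input iff it is a yes-instance iff t(K, M) \<noteq> 1. *)

section \<open>Partial recursive functions\<close>

inductive_cases rf_eval_RZE: "rf_eval RZ xs y"
inductive_cases rf_eval_RSE: "rf_eval RS xs y"
inductive_cases rf_eval_RIdE: "rf_eval (RId i) xs y"
inductive_cases rf_eval_RCnE: "rf_eval (RCn f gs) xs y"
inductive_cases rf_eval_RPrE: "rf_eval (RPr f g) xs y"
inductive_cases rf_eval_RMnE: "rf_eval (RMn f) xs y"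

lemma list_all2_unique:
  assumes "list_all2 (\<lambda>x y. P x y \<and> (\<forall>y'. P x y' \<longrightarrow> y = y')) xs ys" and "list_all2 P xs ys'"
  shows "ys = ys'"
  using assms
proof (induction xs arbitrary: ys ys')
  case (Cons x xs)
  then show ?case by (auto simp: list_all2_Cons1)
qed simp

lemma rf_eval_deterministic: "rf_eval f xs y \<Longrightarrow> rf_eval f xs y' \<Longrightarrow> y = y'"
proof (induction arbitrary: y' rule: rf_eval.induct)
  case (comp xs gs ys f y)
  from comp.prems obtain ys' where "list_all2 (\<lambda>g y. rf_eval g xs y) gs ys'" "rf_eval f ys' y'"
    by (auto elim: rf_eval_RCnE)
  with comp.IH list_all2_unique[OF comp(1)] show ?case by blast
next
  case (prS f g n xs z y)
  from prS.prems obtain z' where "rf_eval (RPr f g) (n # xs) z'" "rf_eval g (z' # n # xs) y'"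
    by (auto elim: rf_eval_RPrE)
  with prS.IH show ?case by metis
next
  case (mn f n xs)
  from mn.prems obtain n' where n': "rf_eval f (n' # xs) 0" "\<forall>m<n'. \<exists>y. rf_eval f (m # xs) y \<and> 0 < y"
    and "y' = n'"
    by (auto elim: rf_eval_RMnE)
  moreover have "\<not> n < n'" using mn.IH(1) n'(2) by fastforce
  moreover have "\<not> n' < n" using mn.IH(2) n'(1) by fastforce
  ultimately show ?case by simp
next
  case zero then show ?case by (auto elim: rf_eval_RZE)
next
  case succ then show ?case by (auto elim: rf_eval_RSE)
next
  case proj then show ?case by (auto elim: rf_eval_RIdE)
next
  case (pr0 f xs y g)
  from pr0.prems have "rf_eval f xs y'" by (auto elim: rf_eval_RPrE)
  with pr0.IH show ?case by blast
qed

lemma rf_eval_RCn1: "rf_eval a xs v \<Longrightarrow> rf_eval g [v] w \<Longrightarrow> rf_eval (RCn g [a]) xs w"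
  by (rule rf_eval.comp[where ys="[v]"]) auto

lemma rf_eval_RCn2:
  "rf_eval a xs v \<Longrightarrow> rf_eval b xs u \<Longrightarrow> rf_eval g [v, u] w \<Longrightarrow> rf_eval (RCn g [a, b]) xs w"
  by (rule rf_eval.comp[where ys="[v, u]"]) auto

lemma rf_eval_RCn1_iff: "rf_eval h xs u \<Longrightarrow> rf_eval (RCn r [h]) xs v \<longleftrightarrow> rf_eval r [u] v"
  using rf_eval_deterministic rf_eval_RCn1 by (fastforce elim: rf_eval_RCnE simp: list_all2_Cons1)

lemma rf_eval_RId0: "rf_eval (RId 0) (x # xs) x"
  using rf_eval.proj[of 0 "x # xs"] by simp

lemma rf_eval_RId1: "rf_eval (RId 1) (x # y # xs) y"
  using rf_eval.proj[of 1 "x # y # xs"] by simp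

fun rconst :: "nat \<Rightarrow> recf" where
  "rconst 0 = RZ"
| "rconst (Suc k) = RCn RS [rconst k]"

lemma rf_eval_rconst: "rf_eval (rconst k) xs k"
  by (induction k) (auto intro: rf_eval.intros rf_eval_RCn1)

definition radd :: recf where
  "radd = RPr (RId 0) (RCn RS [RId 0])"

lemma rf_eval_radd: "rf_eval radd [a, b] (a + b)"
proof (induction a)
  case 0
  show ?case unfolding radd_def using rf_eval.pr0[OF rf_eval_RId0[of b "[]"]] by simp
next
  case (Suc a)
  have "rf_eval (RCn RS [RId 0]) [a + b, a, b] (Suc (a + b))"
    by (rule rf_eval_RCn1[OF rf_eval_RId0 rf_eval.succ])
  with Suc show ?case unfolding radd_def by (auto intro: rf_eval.prS)
qed

definition rtriangle :: recf where
  "rtriangle = RPr RZ (RCn radd [RCn RS [RId 1], RId 0])"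

lemma rf_eval_rtriangle: "rf_eval rtriangle [n] (triangle n)"
proof (induction n)
  case 0
  show ?case unfolding rtriangle_def using rf_eval.pr0[OF rf_eval.zero[of "[]"]] by simp
next
  case (Suc n)
  have "rf_eval (RCn radd [RCn RS [RId 1], RId 0]) [triangle n, n] (Suc n + triangle n)"
    by (rule rf_eval_RCn2[OF rf_eval_RCn1[OF rf_eval_RId1 rf_eval.succ] rf_eval_RId0 rf_eval_radd])
  with Suc show ?case unfolding rtriangle_def by (auto intro: rf_eval.prS simp: add.commute)
qed

definition rpair :: "recf \<Rightarrow> recf \<Rightarrow> recf" where
  "rpair a b = RCn radd [RCn rtriangle [RCn radd [a, b]], a]"

lemma rf_eval_rpair:
  "rf_eval a xs x \<Longrightarrow> rf_eval b xs y \<Longrightarrow> rf_eval (rpair a b) xs (prod_encode (x, y))"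
  unfolding rpair_def prod_encode_def
  by (auto intro!: rf_eval_RCn2 rf_eval_RCn1 rf_eval_radd rf_eval_rtriangle)

lemma adom_empty [simp]: "adom {} = {}"
  by (simp add: adom_def)

lemma adom_insert [simp]: "adom (insert (r, a) I) = set a \<union> adom I"
  by (auto simp: adom_def)

lemma adom_Un [simp]: "adom (A \<union> B) = adom A \<union> adom B"
  by (auto simp: adom_def)

lemma adom_UN: "adom (\<Union>j\<in>A. F j) = (\<Union>j\<in>A. adom (F j))"
  by (auto simp: adom_def)

lemma set_args_subset_adom: "(r, a) \<in> I \<Longrightarrow> set a \<subseteq> adom I"
  by (auto simp: adom_def)

lemma fol_holds_cong: "(\<forall>u\<in>fol_fv q. \<sigma> u = \<sigma>' u) \<Longrightarrow> fol_holds I \<sigma> q = fol_holds I \<sigma>' q"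
proof (induction q arbitrary: \<sigma> \<sigma>')
  case (FAtom r us)
  then show ?case by (metis fol_fv.simps(2) fol_holds.simps(2) map_eq_conv)
next
  case (FEx u q)
  have "\<And>e. fol_holds I (\<sigma>(u := e)) q = fol_holds I (\<sigma>'(u := e)) q"
    by (rule FEx.IH) (use FEx.prems in auto)
  then show ?case by simp
next
  case (FNot q) then show ?case by simp
next
  case (FAnd q1 q2)
  have "fol_holds I \<sigma> q1 = fol_holds I \<sigma>' q1" "fol_holds I \<sigma> q2 = fol_holds I \<sigma>' q2"
    by (rule FAnd.IH; use FAnd.prems in auto)+
  then show ?case by simp
qed auto

lemma mso_holds_cong: "(\<forall>u\<in>mso_dfv \<phi>. \<xi> u = \<xi>' u) \<Longrightarrow> mso_holds \<rho> \<xi> \<pi> \<Pi> \<phi> = mso_holds \<rho> \<xi>' \<pi> \<Pi> \<phi>"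
proof (induction \<phi> arbitrary: \<xi> \<xi>' \<pi> \<Pi>)
  case (MQAt q x)
  then have "fol_holds (\<rho> (\<pi> x)) \<xi> q = fol_holds (\<rho> (\<pi> x)) \<xi>' q" by (intro fol_holds_cong) auto
  with MQAt show ?case by auto
next
  case (MExG u \<phi>)
  have "\<And>e. mso_holds \<rho> (\<xi>(u := e)) \<pi> \<Pi> \<phi> = mso_holds \<rho> (\<xi>'(u := e)) \<pi> \<Pi> \<phi>"
    by (rule MExG.IH) (use MExG.prems in auto)
  then show ?case by simp
next
  case (MNot \<phi>)
  have "\<And>\<pi> \<Pi>. mso_holds \<rho> \<xi> \<pi> \<Pi> \<phi> = mso_holds \<rho> \<xi>' \<pi> \<Pi> \<phi>"
    by (rule MNot.IH) (use MNot.prems in auto)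
  then show ?case by simp
next
  case (MAnd \<phi> \<psi>)
  have "\<And>\<pi> \<Pi>. mso_holds \<rho> \<xi> \<pi> \<Pi> \<phi> = mso_holds \<rho> \<xi>' \<pi> \<Pi> \<phi>"
    "\<And>\<pi> \<Pi>. mso_holds \<rho> \<xi> \<pi> \<Pi> \<psi> = mso_holds \<rho> \<xi>' \<pi> \<Pi> \<psi>"
    by (rule MAnd.IH; use MAnd.prems in auto)+
  then show ?case by simp
next
  case (MExPos x \<phi>)
  have "\<And>\<pi> \<Pi>. mso_holds \<rho> \<xi> \<pi> \<Pi> \<phi> = mso_holds \<rho> \<xi>' \<pi> \<Pi> \<phi>"
    by (rule MExPos.IH) (use MExPos.prems in auto)
  then show ?case by simp
next
  case (MExSet X \<phi>)
  have "\<And>\<pi> \<Pi>. mso_holds \<rho> \<xi> \<pi> \<Pi> \<phi> = mso_holds \<rho> \<xi>' \<pi> \<Pi> \<phi>"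
    by (rule MExSet.IH) (use MExSet.prems in auto)
  then show ?case by simp
qed auto

section \<open>Derived MSO-FO formulas\<close>

definition mtrue :: mso where
  "mtrue = MExPos 0 (MQAt FTrue 0)"

definition mfalse :: mso where
  "mfalse = MNot mtrue"

definition mor :: "mso \<Rightarrow> mso \<Rightarrow> mso" where
  "mor a b = MNot (MAnd (MNot a) (MNot b))"

definition mimp :: "mso \<Rightarrow> mso \<Rightarrow> mso" where
  "mimp a b = MNot (MAnd a (MNot b))"

definition mall_g :: "nat \<Rightarrow> mso \<Rightarrow> mso" where
  "mall_g u a = MNot (MExG u (MNot a))"

fun mconj :: "mso list \<Rightarrow> mso" where
  "mconj [] = mtrue"
| "mconj (a # as) = MAnd a (mconj as)"

fun mex_gs :: "nat list \<Rightarrow> mso \<Rightarrow> mso" where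
  "mex_gs [] a = a"
| "mex_gs (v # vs) a = MExG v (mex_gs vs a)"

definition mall_gs :: "nat list \<Rightarrow> mso \<Rightarrow> mso" where
  "mall_gs vs a = MNot (mex_gs vs (MNot a))"

definition mfact :: "nat \<Rightarrow> nat list \<Rightarrow> mso" where
  "mfact R vs = MExPos 0 (MQAt (FAtom R vs) 0)"

definition meq :: "nat \<Rightarrow> nat \<Rightarrow> mso" where
  "meq u w = MExPos 0 (MQAt (FEq u w) 0)"

text \<open>The element \<open>u\<close> is absent at position \<open>p\<close> and present at position \<open>p + 1\<close>, with the
  position variables \<open>p + 1\<close> and \<open>p + 2\<close> used as scratch.\<close>
definition mborn_at :: "nat \<Rightarrow> nat \<Rightarrow> mso" where
  "mborn_at u p = MAnd (MNot (MQAt (FEq u u) p)) (MExPos (p+1) (MAnd (MAnd (MLess p (p+1))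
     (MNot (MExPos (p+2) (MAnd (MLess p (p+2)) (MLess (p+2) (p+1)))))) (MQAt (FEq u u) (p+1))))"

definition mzero :: "nat \<Rightarrow> mso" where
  "mzero u = MExPos 0 (MAnd (MNot (MExPos 1 (MLess 1 0))) (mborn_at u 0))"

definition msucc :: "nat \<Rightarrow> nat \<Rightarrow> mso" where
  "msucc u w = MExPos 0 (MExPos 3 (MAnd (MAnd (mborn_at u 0) (mborn_at w 3))
     (MAnd (MLess 0 3) (MNot (MExPos 6 (MAnd (MLess 0 6) (MLess 6 3)))))))"

definition mless :: "nat \<Rightarrow> nat \<Rightarrow> mso" where
  "mless u w = MExPos 0 (MExPos 3 (MAnd (MAnd (mborn_at u 0) (mborn_at w 3)) (MLess 0 3)))"

fun mnumeral :: "nat \<Rightarrow> mso" where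
  "mnumeral 0 = mzero 0"
| "mnumeral (Suc k) = MExG 1 (MAnd (msucc 1 0) (MExG 0 (MAnd (meq 0 1) (mnumeral k))))"

lemma holds_mconnectives:
  "mso_holds \<rho> \<xi> \<pi> \<Pi> mtrue"
  "\<not> mso_holds \<rho> \<xi> \<pi> \<Pi> mfalse"
  "mso_holds \<rho> \<xi> \<pi> \<Pi> (mor a b) \<longleftrightarrow> mso_holds \<rho> \<xi> \<pi> \<Pi> a \<or> mso_holds \<rho> \<xi> \<pi> \<Pi> b"
  "mso_holds \<rho> \<xi> \<pi> \<Pi> (mimp a b) \<longleftrightarrow> (mso_holds \<rho> \<xi> \<pi> \<Pi> a \<longrightarrow> mso_holds \<rho> \<xi> \<pi> \<Pi> b)"
  by (auto simp: mtrue_def mfalse_def mor_def mimp_def)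

lemma holds_mconj: "mso_holds \<rho> \<xi> \<pi> \<Pi> (mconj as) \<longleftrightarrow> (\<forall>a\<in>set as. mso_holds \<rho> \<xi> \<pi> \<Pi> a)"
  by (induction as) (auto simp: holds_mconnectives)

lemma free_vars_derived [simp]:
  "mso_dfv mtrue = {}" "mso_pfv mtrue = {}" "mso_sfv mtrue = {}"
  "mso_dfv mfalse = {}" "mso_pfv mfalse = {}" "mso_sfv mfalse = {}"
  "mso_dfv (mor a b) = mso_dfv a \<union> mso_dfv b" "mso_pfv (mor a b) = mso_pfv a \<union> mso_pfv b"
  "mso_sfv (mor a b) = mso_sfv a \<union> mso_sfv b"
  "mso_dfv (mimp a b) = mso_dfv a \<union> mso_dfv b" "mso_pfv (mimp a b) = mso_pfv a \<union> mso_pfv b"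
  "mso_sfv (mimp a b) = mso_sfv a \<union> mso_sfv b"
  "mso_dfv (mall_g u a) = mso_dfv a - {u}" "mso_pfv (mall_g u a) = mso_pfv a"
  "mso_sfv (mall_g u a) = mso_sfv a"
  "mso_dfv (mfact R vs) = set vs" "mso_pfv (mfact R vs) = {}" "mso_sfv (mfact R vs) = {}"
  "mso_dfv (meq u w) = {u, w}" "mso_pfv (meq u w) = {}" "mso_sfv (meq u w) = {}"
  "mso_dfv (mzero u) = {u}" "mso_pfv (mzero u) = {}" "mso_sfv (mzero u) = {}"
  "mso_dfv (msucc u w) = {u, w}" "mso_pfv (msucc u w) = {}" "mso_sfv (msucc u w) = {}"
  "mso_dfv (mless u w) = {u, w}" "mso_pfv (mless u w) = {}" "mso_sfv (mless u w) = {}"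
  by (auto simp: mtrue_def mfalse_def mor_def mimp_def mall_g_def mfact_def meq_def mborn_at_def
      mzero_def msucc_def mless_def)

lemma free_vars_mconj [simp]:
  "mso_dfv (mconj as) = (\<Union>a\<in>set as. mso_dfv a)" "mso_pfv (mconj as) = (\<Union>a\<in>set as. mso_pfv a)"
  "mso_sfv (mconj as) = (\<Union>a\<in>set as. mso_sfv a)"
  by (induction as) auto

lemma free_vars_mex_gs [simp]:
  "mso_dfv (mex_gs vs a) = mso_dfv a - set vs" "mso_pfv (mex_gs vs a) = mso_pfv a"
  "mso_sfv (mex_gs vs a) = mso_sfv a"
  by (induction vs) auto

lemma free_vars_mall_gs [simp]:
  "mso_dfv (mall_gs vs a) = mso_dfv a - set vs" "mso_pfv (mall_gs vs a) = mso_pfv a"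
  "mso_sfv (mall_gs vs a) = mso_sfv a"
  by (simp_all add: mall_gs_def)

lemma free_vars_mnumeral [simp]:
  "mso_dfv (mnumeral k) = {0}" "mso_pfv (mnumeral k) = {}" "mso_sfv (mnumeral k) = {}"
  by (induction k) auto

lemma mso_over_derived [simp]:
  "mso_over Sc mtrue" "mso_over Sc mfalse"
  "mso_over Sc (mor a b) \<longleftrightarrow> mso_over Sc a \<and> mso_over Sc b"
  "mso_over Sc (mimp a b) \<longleftrightarrow> mso_over Sc a \<and> mso_over Sc b"
  "mso_over Sc (mall_g u a) \<longleftrightarrow> mso_over Sc a"
  "mso_over Sc (mfact R vs) \<longleftrightarrow> (R, length vs) \<in> set Sc"
  "mso_over Sc (meq u w)" "mso_over Sc (mzero u)" "mso_over Sc (msucc u w)" "mso_over Sc (mless u w)"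
  by (auto simp: mtrue_def mfalse_def mor_def mimp_def mall_g_def mfact_def meq_def mborn_at_def
      mzero_def msucc_def mless_def)

lemma mso_over_mconj [simp]: "mso_over Sc (mconj as) \<longleftrightarrow> (\<forall>a\<in>set as. mso_over Sc a)"
  by (induction as) auto

lemma mso_over_mex_gs [simp]: "mso_over Sc (mex_gs vs a) \<longleftrightarrow> mso_over Sc a"
  by (induction vs) auto

lemma mso_over_mall_gs [simp]: "mso_over Sc (mall_gs vs a) \<longleftrightarrow> mso_over Sc a"
  by (simp add: mall_gs_def)

lemma mso_over_mnumeral [simp]: "mso_over Sc (mnumeral k)"
  by (induction k) auto

section \<open>Runs that create one element per step\<close>

fun fun_upds :: "('a \<Rightarrow> 'b) \<Rightarrow> 'a list \<Rightarrow> 'b list \<Rightarrow> 'a \<Rightarrow> 'b" where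
  "fun_upds \<nu> (v # vs) (n # ns) = fun_upds (\<nu>(v := n)) vs ns"
| "fun_upds \<nu> _ _ = \<nu>"

lemma fun_upds_notin: "x \<notin> set vs \<Longrightarrow> fun_upds \<nu> vs ns x = \<nu> x"
  by (induction \<nu> vs ns rule: fun_upds.induct) auto

lemma map_fun_upds: "distinct vs \<Longrightarrow> length ns = length vs \<Longrightarrow> map (fun_upds \<nu> vs ns) vs = ns"
  by (induction \<nu> vs ns rule: fun_upds.induct) (auto simp: fun_upds_notin cong: map_cong)

lemma map_fun_upds_notin: "set ws \<inter> set vs = {} \<Longrightarrow> map (fun_upds \<nu> vs ns) ws = map \<nu> ws"
  by (intro map_cong refl fun_upds_notin) blast

text \<open>Element \<open>birth n\<close> is created by the \<open>n\<close>-th step. Evaluating data variables under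
  \<open>birth \<circ> \<nu>\<close> lets them denote natural numbers, and \<open>run_facts\<close> is the set of facts recorded
  along the run, read back through \<open>birth\<close>.\<close>
locale numbered_run =
  fixes \<rho> :: "nat \<Rightarrow> inst" and birth :: "nat \<Rightarrow> nat"
  assumes inj_birth: "inj birth" and adom_birth: "\<And>i. adom (\<rho> i) = birth ` {..<i}"
begin

definition run_facts :: inst where
  "run_facts = {(R, xs). \<exists>i. (R, map birth xs) \<in> \<rho> i}"

lemma gadom_eq_range_birth: "gadom \<rho> = range birth"
  by (auto simp: gadom_def adom_birth intro: UN_I[of "Suc _"])

lemma birth_in_adom_iff: "birth a \<in> adom (\<rho> i) \<longleftrightarrow> a < i"
  using inj_birth by (auto simp: adom_birth inj_eq)

lemma holds_MExG:
  "mso_holds \<rho> (birth \<circ> \<nu>) \<pi> \<Pi> (MExG u \<phi>) \<longleftrightarrow> (\<exists>n. mso_holds \<rho> (birth \<circ> \<nu>(u := n)) \<pi> \<Pi> \<phi>)"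
  by (auto simp: gadom_eq_range_birth fun_upd_comp)

lemma holds_mall_g:
  "mso_holds \<rho> (birth \<circ> \<nu>) \<pi> \<Pi> (mall_g u \<phi>) \<longleftrightarrow> (\<forall>n. mso_holds \<rho> (birth \<circ> \<nu>(u := n)) \<pi> \<Pi> \<phi>)"
  by (simp add: mall_g_def holds_MExG del: mso_holds.simps(8))

lemma holds_mex_gs:
  "mso_holds \<rho> (birth \<circ> \<nu>) \<pi> \<Pi> (mex_gs vs a) \<longleftrightarrow>
     (\<exists>ns. length ns = length vs \<and> mso_holds \<rho> (birth \<circ> fun_upds \<nu> vs ns) \<pi> \<Pi> a)"
proof (induction vs arbitrary: \<nu>)
  case (Cons v vs)
  have "mso_holds \<rho> (birth \<circ> \<nu>) \<pi> \<Pi> (mex_gs (v # vs) a) \<longleftrightarrow>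
    (\<exists>n ns. length ns = length vs \<and> mso_holds \<rho> (birth \<circ> fun_upds (\<nu>(v := n)) vs ns) \<pi> \<Pi> a)"
    by (simp only: mex_gs.simps holds_MExG Cons.IH)
  also have "\<dots> \<longleftrightarrow>
    (\<exists>ns. length ns = length (v # vs) \<and> mso_holds \<rho> (birth \<circ> fun_upds \<nu> (v # vs) ns) \<pi> \<Pi> a)"
    by (auto simp: length_Suc_conv) (metis fun_upds.simps(1), blast)
  finally show ?case .
qed simp

lemma holds_mall_gs:
  "mso_holds \<rho> (birth \<circ> \<nu>) \<pi> \<Pi> (mall_gs vs a) \<longleftrightarrow>
     (\<forall>ns. length ns = length vs \<longrightarrow> mso_holds \<rho> (birth \<circ> fun_upds \<nu> vs ns) \<pi> \<Pi> a)"
  by (simp add: mall_gs_def holds_mex_gs del: mso_holds.simps(8))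

lemma holds_mfact: "mso_holds \<rho> (birth \<circ> \<nu>) \<pi> \<Pi> (mfact R vs) \<longleftrightarrow> (R, map \<nu> vs) \<in> run_facts"
proof -
  have "mso_holds \<rho> (birth \<circ> \<nu>) \<pi> \<Pi> (mfact R vs) \<longleftrightarrow> (\<exists>i. (R, map birth (map \<nu> vs)) \<in> \<rho> i)"
    unfolding mfact_def using set_args_subset_adom by fastforce
  then show ?thesis by (simp add: run_facts_def)
qed

lemma holds_mborn_at: "mso_holds \<rho> (birth \<circ> \<nu>) \<pi> \<Pi> (mborn_at u p) \<longleftrightarrow> \<nu> u = \<pi> p"
proof -
  have "mso_holds \<rho> (birth \<circ> \<nu>) \<pi> \<Pi> (mborn_at u p) \<longleftrightarrow>
    \<not> \<nu> u < \<pi> p \<and> (\<exists>j. \<pi> p < j \<and> \<not> (\<exists>r. \<pi> p < r \<and> r < j) \<and> \<nu> u < j)"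
    by (simp add: mborn_at_def birth_in_adom_iff)
  also have "\<dots> \<longleftrightarrow> \<nu> u = \<pi> p"
    by (auto intro!: exI[of _ "Suc (\<pi> p)"])
  finally show ?thesis .
qed

lemma holds_mzero: "mso_holds \<rho> (birth \<circ> \<nu>) \<pi> \<Pi> (mzero u) \<longleftrightarrow> \<nu> u = 0"
  by (auto simp: mzero_def holds_mborn_at)

lemma holds_msucc: "mso_holds \<rho> (birth \<circ> \<nu>) \<pi> \<Pi> (msucc u w) \<longleftrightarrow> \<nu> w = Suc (\<nu> u)"
  by (auto simp: msucc_def holds_mborn_at)

lemma holds_mless: "mso_holds \<rho> (birth \<circ> \<nu>) \<pi> \<Pi> (mless u w) \<longleftrightarrow> \<nu> u < \<nu> w"
  by (auto simp: mless_def holds_mborn_at)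

lemma holds_meq: "mso_holds \<rho> (birth \<circ> \<nu>) \<pi> \<Pi> (meq u w) \<longleftrightarrow> \<nu> u = \<nu> w"
  using inj_birth by (auto simp: meq_def birth_in_adom_iff inj_eq)

lemma holds_mnumeral: "mso_holds \<rho> (birth \<circ> \<nu>) \<pi> \<Pi> (mnumeral k) \<longleftrightarrow> \<nu> 0 = k"
proof (induction k arbitrary: \<nu>)
  case 0
  then show ?case by (simp only: mnumeral.simps holds_mzero)
next
  case (Suc k)
  show ?case
    by (simp only: mnumeral.simps mso_holds.simps(5) holds_MExG holds_msucc holds_meq Suc.IH) auto
qed

end

lemma numbered_runI:
  assumes "adom (\<rho> 0) = {}"
    and "\<And>i. \<exists>e. e \<notin> adom (\<rho> i) \<and> adom (\<rho> (Suc i)) = insert e (adom (\<rho> i))"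
  shows "\<exists>birth. numbered_run \<rho> birth"
proof
  define birth where
    "birth i = (SOME e. e \<notin> adom (\<rho> i) \<and> adom (\<rho> (Suc i)) = insert e (adom (\<rho> i)))" for i
  have birth: "birth i \<notin> adom (\<rho> i)" "adom (\<rho> (Suc i)) = insert (birth i) (adom (\<rho> i))" for i
    using someI_ex[OF assms(2)[of i]] unfolding birth_def by blast+
  have adom: "adom (\<rho> i) = birth ` {..<i}" for i
    by (induction i) (simp_all add: assms(1) birth(2) lessThan_Suc)
  have "inj birth"
  proof (rule injI)
    have earlier: "birth x \<noteq> birth y" if "x < y" for x y
      using birth(1)[of y] adom[of y] that by (metis imageI lessThan_iff)
    show "birth x = birth y \<Longrightarrow> x = y" for x y
      using earlier[of x y] earlier[of y x] by (metis linorder_neqE_nat)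
  qed
  with adom show "numbered_run \<rho> birth"
    by unfold_locales
qed

section \<open>Graphs of partial recursive functions\<close>

instance recf :: countable
  by countable_datatype

text \<open>Relation names for the graphs of programs: \<open>graph_rel g l\<close> holds the tuples \<open>xs @ [y]\<close>
  with \<open>length xs = l\<close> and \<open>g(xs) = y\<close>. Name \<open>0\<close> is left free for the clock relation
  of the DMS below.\<close>
definition graph_rel :: "recf \<Rightarrow> nat \<Rightarrow> nat" where
  "graph_rel g l = Suc (to_nat (g, l))"

lemma graph_rel_eq_iff: "graph_rel g l = graph_rel g' l' \<longleftrightarrow> g = g' \<and> l = l'"
  by (auto simp: graph_rel_def)

lemma graph_rel_nonzero [simp]: "graph_rel g l \<noteq> 0"
  by (simp add: graph_rel_def)

text \<open>The programs, with the arities at which they are called, that the defining clause of \<open>g\<close>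
  at arity \<open>l\<close> refers to, directly or indirectly.\<close>
fun subprograms :: "recf \<Rightarrow> nat \<Rightarrow> (recf \<times> nat) list" where
  "subprograms RZ l = [(RZ, l)]"
| "subprograms RS l = [(RS, l)]"
| "subprograms (RId i) l = [(RId i, l)]"
| "subprograms (RCn f gs) l =
     (RCn f gs, l) # subprograms f (length gs) @ concat (map (\<lambda>g. subprograms g l) gs)"
| "subprograms (RPr f g) l = (RPr f g, l) # subprograms f (l - 1) @ subprograms g (Suc l)"
| "subprograms (RMn f) l = (RMn f, l) # subprograms f (Suc l)"

lemma subprograms_self: "(g, l) \<in> set (subprograms g l)"
  by (cases g) auto

lemma subprograms_trans:
  "(h, k) \<in> set (subprograms g l) \<Longrightarrow> set (subprograms h k) \<subseteq> set (subprograms g l)"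
proof (induction g l rule: subprograms.induct)
  case (4 f gs l)
  then show ?case by fastforce
qed auto

text \<open>A fact \<open>graph_rel g l (xs @ [y])\<close> is justified in \<open>V\<close> if the defining clause of \<open>g\<close>
  produces \<open>y\<close> from \<open>xs\<close> using only facts of \<open>V\<close> about the programs it calls.\<close>
fun justified :: "inst \<Rightarrow> recf \<Rightarrow> nat \<Rightarrow> nat list \<Rightarrow> nat \<Rightarrow> bool" where
  "justified V RZ l xs y \<longleftrightarrow> y = 0"
| "justified V RS l xs y \<longleftrightarrow> 0 < l \<and> y = Suc (xs ! 0)"
| "justified V (RId i) l xs y \<longleftrightarrow> i < l \<and> y = xs ! i"
| "justified V (RCn f gs) l xs y \<longleftrightarrow> (\<exists>ys. length ys = length gs \<and>
     (\<forall>j<length gs. (graph_rel (gs ! j) l, xs @ [ys ! j]) \<in> V) \<and> (graph_rel f (length gs), ys @ [y]) \<in> V)"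
| "justified V (RPr f g) l xs y \<longleftrightarrow> 0 < l \<and>
     (xs ! 0 = 0 \<and> (graph_rel f (l - 1), tl xs @ [y]) \<in> V \<or>
      (\<exists>m z. xs ! 0 = Suc m \<and> (graph_rel (RPr f g) l, (m # tl xs) @ [z]) \<in> V \<and>
         (graph_rel g (Suc l), (z # m # tl xs) @ [y]) \<in> V))"
| "justified V (RMn f) l xs y \<longleftrightarrow> (graph_rel f (Suc l), (y # xs) @ [0]) \<in> V \<and>
     (\<forall>m<y. \<exists>w. w \<noteq> 0 \<and> (graph_rel f (Suc l), (m # xs) @ [w]) \<in> V)"

lemma justified_mono: "V \<subseteq> V' \<Longrightarrow> justified V g l xs y \<Longrightarrow> justified V' g l xs y"
  by (cases g) (simp_all, blast+)

definition all_justified :: "inst \<Rightarrow> (recf \<times> nat) set \<Rightarrow> bool" where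
  "all_justified V S \<longleftrightarrow> (\<forall>(g, l)\<in>S. \<forall>xs y.
     length xs = l \<longrightarrow> (graph_rel g l, xs @ [y]) \<in> V \<longrightarrow> justified V g l xs y)"

lemma all_justifiedD:
  "all_justified V S \<Longrightarrow> (g, l) \<in> S \<Longrightarrow> length xs = l \<Longrightarrow> (graph_rel g l, xs @ [y]) \<in> V \<Longrightarrow>
    justified V g l xs y"
  unfolding all_justified_def by blast

definition graph_sound :: "inst \<Rightarrow> recf \<Rightarrow> nat \<Rightarrow> bool" where
  "graph_sound V g l \<longleftrightarrow> (\<forall>xs y. length xs = l \<longrightarrow> (graph_rel g l, xs @ [y]) \<in> V \<longrightarrow> rf_eval g xs y)"

lemma graph_soundD: "graph_sound V g l \<Longrightarrow> length xs = l \<Longrightarrow> (graph_rel g l, xs @ [y]) \<in> V \<Longrightarrow> rf_eval g xs y"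
  unfolding graph_sound_def by blast

text \<open>The clause of \<open>RPr f g\<close> refers to \<open>RPr f g\<close> itself, at a smaller counter.\<close>
lemma graph_sound_RPr:
  assumes V: "all_justified V S" "(RPr f g, l) \<in> S"
    and f: "graph_sound V f (l - 1)" and g: "graph_sound V g (Suc l)"
  shows "graph_sound V (RPr f g) l"
  unfolding graph_sound_def
proof (intro allI impI)
  fix xs y
  assume len: "length xs = l" and xs_y: "(graph_rel (RPr f g) l, xs @ [y]) \<in> V"
  note J = all_justifiedD[OF V]
  from J[OF len xs_y] len obtain n xs' where xs: "xs = n # xs'"
    by (cases xs) auto
  with len have len': "length xs' = l - 1" and len_Cons: "length (m # xs') = l" for m
    by auto
  have "(graph_rel (RPr f g) l, (n # xs') @ [y]) \<in> V \<Longrightarrow> rf_eval (RPr f g) (n # xs') y" for y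
  proof (induction n arbitrary: y)
    case 0
    then have "(graph_rel f (l - 1), xs' @ [y]) \<in> V"
      using J[OF len_Cons] by fastforce
    then show ?case using graph_soundD[OF f len'] by (blast intro: rf_eval.pr0)
  next
    case (Suc n)
    then obtain z where z: "(graph_rel (RPr f g) l, (n # xs') @ [z]) \<in> V"
      "(graph_rel g (Suc l), (z # n # xs') @ [y]) \<in> V"
      using J[OF len_Cons] by fastforce
    have "rf_eval g (z # n # xs') y"
      using graph_soundD[OF g _ z(2)] len_Cons by simp
    with Suc.IH[OF z(1)] show ?case
      by (rule rf_eval.prS)
  qed
  with xs xs_y show "rf_eval (RPr f g) xs y"
    by simp
qed

lemma all_justified_subprograms:
  "all_justified V S \<Longrightarrow> set (subprograms g l) \<subseteq> S \<Longrightarrow> length xs = l \<Longrightarrow>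
    (graph_rel g l, xs @ [y]) \<in> V \<Longrightarrow> justified V g l xs y"
  by (meson all_justifiedD subprograms_self subsetD)

lemma all_justified_graph_sound:
  assumes V: "all_justified V S"
  shows "set (subprograms g l) \<subseteq> S \<Longrightarrow> graph_sound V g l"
proof (induction g arbitrary: l)
  case (RCn f gs)
  have gs: "graph_sound V g l" if "g \<in> set gs" for g
    using RCn.IH(2)[OF that] RCn.prems that by auto
  have f: "graph_sound V f (length gs)"
    using RCn.IH(1) RCn.prems by auto
  show ?case unfolding graph_sound_def
  proof (intro allI impI)
    fix xs y
    assume len: "length xs = l" and xs_y: "(graph_rel (RCn f gs) l, xs @ [y]) \<in> V"
    obtain ys where ys: "length ys = length gs"
      "\<forall>j<length gs. (graph_rel (gs ! j) l, xs @ [ys ! j]) \<in> V" "(graph_rel f (length gs), ys @ [y]) \<in> V"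
      using all_justified_subprograms[OF V RCn.prems len xs_y] by auto
    have "rf_eval (gs ! j) xs (ys ! j)" if "j < length gs" for j
      using graph_soundD[OF gs[OF nth_mem[OF that]] len] ys(2) that by blast
    with ys(1) have "list_all2 (\<lambda>g y. rf_eval g xs y) gs ys"
      by (simp add: list_all2_conv_all_nth)
    moreover have "rf_eval f ys y"
      using graph_soundD[OF f ys(1) ys(3)] .
    ultimately show "rf_eval (RCn f gs) xs y"
      by (rule rf_eval.comp)
  qed
next
  case (RPr f g)
  then show ?case by (intro graph_sound_RPr[OF V]) auto
next
  case (RMn f)
  have f: "graph_sound V f (Suc l)"
    using RMn by auto
  show ?case unfolding graph_sound_def
  proof (intro allI impI)
    fix xs y
    assume len: "length xs = l" and xs_y: "(graph_rel (RMn f) l, xs @ [y]) \<in> V"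
    then have J: "justified V (RMn f) l xs y"
      by (rule all_justified_subprograms[OF V RMn.prems])
    have "rf_eval f (y # xs) 0"
      using J graph_soundD[OF f, of "y # xs"] len by simp
    moreover have "\<forall>m<y. \<exists>w. rf_eval f (m # xs) w \<and> w \<noteq> 0"
      using J graph_soundD[OF f, of "_ # xs"] len by fastforce
    ultimately show "rf_eval (RMn f) xs y"
      by (rule rf_eval.mn)
  qed
next
  case RZ
  then show ?case using all_justified_subprograms[OF V RZ.prems]
    by (auto simp: graph_sound_def intro: rf_eval.zero)
next
  case RS
  then show ?case using all_justified_subprograms[OF V RS.prems]
    by (fastforce simp: graph_sound_def neq_Nil_conv intro: rf_eval.succ)
next
  case (RId i)
  then show ?case using all_justified_subprograms[OF V RId.prems]
    by (fastforce simp: graph_sound_def intro: rf_eval.proj)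
qed

definition true_graphs :: "(recf \<times> nat) set \<Rightarrow> inst" where
  "true_graphs S = {(graph_rel g l, xs @ [y]) | g l xs y. (g, l) \<in> S \<and> length xs = l \<and> rf_eval g xs y}"

lemma true_graphsI:
  "(g, l) \<in> S \<Longrightarrow> length xs = l \<Longrightarrow> rf_eval g xs y \<Longrightarrow> (graph_rel g l, xs @ [y]) \<in> true_graphs S"
  unfolding true_graphs_def by blast

lemma justified_true_graphs:
  assumes S: "set (subprograms g l) \<subseteq> S" and len: "length xs = l" and ev: "rf_eval g xs y"
  shows "justified (true_graphs S) g l xs y"
  using ev
proof cases
  case (comp gs ys f)
  have len_ys: "length ys = length gs" and ev_gs: "\<forall>j<length gs. rf_eval (gs ! j) xs (ys ! j)"
    using comp(2) by (simp_all add: list_all2_conv_all_nth)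
  have "(gs ! j, l) \<in> S" if "j < length gs" for j
    using S comp(1) subprograms_self[of "gs ! j" l] nth_mem[OF that] by auto
  then have "\<forall>j<length gs. (graph_rel (gs ! j) l, xs @ [ys ! j]) \<in> true_graphs S"
    using ev_gs len by (blast intro: true_graphsI)
  moreover have "(graph_rel f (length gs), ys @ [y]) \<in> true_graphs S"
    using S comp subprograms_self[of f "length gs"] len_ys by (auto intro: true_graphsI)
  ultimately show ?thesis
    using comp(1) len_ys by auto
next
  case (pr0 f xs' g')
  then have "(graph_rel f (l - 1), xs' @ [y]) \<in> true_graphs S"
    using S len subprograms_self[of f "l - 1"] by (auto intro: true_graphsI)
  with pr0 len show ?thesis
    by auto
next
  case (prS f g' n xs' z)
  have S_prS: "(RPr f g', l) \<in> S" "(g', Suc l) \<in> S"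
    using S prS(1) subprograms_self[of g' "Suc l"] by auto
  have "(graph_rel (RPr f g') l, (n # xs') @ [z]) \<in> true_graphs S"
    by (rule true_graphsI[OF S_prS(1)]) (use len prS(2,3) in simp_all)
  moreover have "(graph_rel g' (Suc l), (z # n # xs') @ [y]) \<in> true_graphs S"
    by (rule true_graphsI[OF S_prS(2)]) (use len prS(2,4) in simp_all)
  ultimately show ?thesis
    using prS(1,2) len by simp blast
next
  case (mn f)
  have f: "(f, Suc l) \<in> S"
    using S mn(1) subprograms_self[of f "Suc l"] by auto
  have "\<exists>w. w \<noteq> 0 \<and> (graph_rel f (Suc l), (m # xs) @ [w]) \<in> true_graphs S" if m: "m < y" for m
  proof -
    obtain w where "rf_eval f (m # xs) w" "w \<noteq> 0"
      using mn(3) m by blast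
    moreover have "length (m # xs) = Suc l"
      using len by simp
    ultimately show ?thesis
      using true_graphsI[OF f] by blast
  qed
  moreover have "(graph_rel f (Suc l), (y # xs) @ [0]) \<in> true_graphs S"
    by (rule true_graphsI[OF f]) (use len mn(2) in simp_all)
  ultimately show ?thesis
    using mn(1) by simp
qed (use len in auto)

section \<open>Justification of recorded graphs as an MSO-FO sentence\<close>

text \<open>Data variable \<open>0\<close> holds the output of a program, \<open>1\<close> and \<open>2\<close> are scratch variables, the
  arguments occupy \<open>10, 11, \<dots>\<close>, and the intermediate results of a composition come right after
  the arguments.\<close>
definition arg_vars :: "nat \<Rightarrow> nat list" where
  "arg_vars l = map (\<lambda>i. 10 + i) [0..<l]"

definition aux_vars :: "nat \<Rightarrow> nat \<Rightarrow> nat list" where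
  "aux_vars l k = map (\<lambda>j. 10 + l + j) [0..<k]"

lemma length_arg_vars [simp]: "length (arg_vars l) = l"
  by (simp add: arg_vars_def)

lemma length_aux_vars [simp]: "length (aux_vars l k) = k"
  by (simp add: aux_vars_def)

lemma set_arg_vars: "set (arg_vars l) = {10..<10 + l}"
  by (auto simp: arg_vars_def)

lemma set_aux_vars: "set (aux_vars l k) = {10 + l..<10 + l + k}"
  by (force simp: aux_vars_def)

lemma distinct_arg_vars [simp]: "distinct (arg_vars l)"
  by (simp add: arg_vars_def distinct_map)

lemma distinct_aux_vars [simp]: "distinct (aux_vars l k)"
  by (simp add: aux_vars_def distinct_map)

lemma nth_arg_vars [simp]: "i < l \<Longrightarrow> arg_vars l ! i = 10 + i"
  by (simp add: arg_vars_def)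

lemma nth_aux_vars [simp]: "j < k \<Longrightarrow> aux_vars l k ! j = 10 + l + j"
  by (simp add: aux_vars_def)

lemma map_arg_vars_cong: "(\<And>u. 10 \<le> u \<Longrightarrow> \<nu>' u = \<nu> u) \<Longrightarrow> map \<nu>' (arg_vars l) = map \<nu> (arg_vars l)"
  by (simp add: arg_vars_def)

lemma map_tl_arg_vars_cong:
  "(\<And>u. 10 \<le> u \<Longrightarrow> \<nu>' u = \<nu> u) \<Longrightarrow> map \<nu>' (tl (arg_vars l)) = tl (map \<nu> (arg_vars l))"
  by (metis map_tl map_arg_vars_cong)

fun mjustified :: "recf \<Rightarrow> nat \<Rightarrow> mso" where
  "mjustified RZ l = mzero 0"
| "mjustified RS l = (if 0 < l then msucc 10 0 else mfalse)"
| "mjustified (RId i) l = (if i < l then meq 0 (10 + i) else mfalse)"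
| "mjustified (RCn f gs) l = mex_gs (aux_vars l (length gs))
     (MAnd (mconj (map (\<lambda>j. mfact (graph_rel (gs ! j) l) (arg_vars l @ [aux_vars l (length gs) ! j]))
        [0..<length gs]))
       (mfact (graph_rel f (length gs)) (aux_vars l (length gs) @ [0])))"
| "mjustified (RPr f g) l = (if 0 < l then
     mor (MAnd (mzero 10) (mfact (graph_rel f (l - 1)) (tl (arg_vars l) @ [0])))
       (MExG 1 (MExG 2 (MAnd (msucc 1 10) (MAnd (mfact (graph_rel (RPr f g) l) (1 # tl (arg_vars l) @ [2]))
          (mfact (graph_rel g (Suc l)) (2 # 1 # tl (arg_vars l) @ [0]))))))
     else mfalse)"
| "mjustified (RMn f) l =
     MAnd (MExG 2 (MAnd (mzero 2) (mfact (graph_rel f (Suc l)) (0 # arg_vars l @ [2]))))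
       (mall_g 1 (mimp (mless 1 0)
          (MExG 2 (MAnd (MNot (mzero 2)) (mfact (graph_rel f (Suc l)) (1 # arg_vars l @ [2]))))))"

definition mgraph_justified :: "recf \<Rightarrow> nat \<Rightarrow> mso" where
  "mgraph_justified g l =
     mall_g 0 (mall_gs (arg_vars l) (mimp (mfact (graph_rel g l) (arg_vars l @ [0])) (mjustified g l)))"

definition mall_justified :: "(recf \<times> nat) list \<Rightarrow> mso" where
  "mall_justified SL = mconj (map (\<lambda>(g, l). mgraph_justified g l) SL)"

text \<open>The body of the diagonal sentence; its free data variables \<open>0\<close> and \<open>1\<close> are bound
  to \<open>n\<close> and \<open>m\<close> by \<open>mdiag n m\<close>.\<close>
definition mdiag_body :: "(recf \<times> nat) list \<Rightarrow> recf \<Rightarrow> mso" where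
  "mdiag_body SL t = MAnd (mall_justified SL)
     (MExG 2 (MAnd (MExG 3 (MAnd (mzero 3) (msucc 3 2))) (mfact (graph_rel t 2) [0, 1, 2])))"

definition mdiag :: "nat \<Rightarrow> nat \<Rightarrow> mso \<Rightarrow> mso" where
  "mdiag n m A = MNot (MExG 0 (MAnd (mnumeral n) (MExG 1 (MAnd (MExG 0 (MAnd (meq 0 1) (mnumeral m))) A))))"

context numbered_run
begin

lemma holds_mjustified_RCn:
  "mso_holds \<rho> (birth \<circ> \<nu>) \<pi> \<Pi> (mjustified (RCn f gs) l) \<longleftrightarrow>
     justified run_facts (RCn f gs) l (map \<nu> (arg_vars l)) (\<nu> 0)"
proof -
  let ?k = "length gs"
  let ?body = "MAnd (mconj (map (\<lambda>j. mfact (graph_rel (gs ! j) l) (arg_vars l @ [aux_vars l ?k ! j])) [0..<?k]))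
    (mfact (graph_rel f ?k) (aux_vars l ?k @ [0]))"
  have body: "mso_holds \<rho> (birth \<circ> fun_upds \<nu> (aux_vars l ?k) ns) \<pi> \<Pi> ?body \<longleftrightarrow>
     (\<forall>j<?k. (graph_rel (gs ! j) l, map \<nu> (arg_vars l) @ [ns ! j]) \<in> run_facts) \<and>
     (graph_rel f ?k, ns @ [\<nu> 0]) \<in> run_facts"
    if len: "length ns = ?k" for ns
  proof -
    let ?\<nu> = "fun_upds \<nu> (aux_vars l ?k) ns"
    have aux: "map ?\<nu> (aux_vars l ?k) = ns"
      using len by (simp add: map_fun_upds)
    then have aux_nth: "?\<nu> (aux_vars l ?k ! j) = ns ! j" if "j < ?k" for j
      using that len by (metis nth_map length_aux_vars)
    have args: "map ?\<nu> (arg_vars l) = map \<nu> (arg_vars l)"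
      by (rule map_fun_upds_notin) (auto simp: set_arg_vars set_aux_vars)
    have out: "?\<nu> 0 = \<nu> 0"
      by (rule fun_upds_notin) (auto simp: set_aux_vars)
    show ?thesis
      by (auto simp: holds_mconj holds_mfact args out aux aux_nth simp del: nth_aux_vars)
  qed
  have "mso_holds \<rho> (birth \<circ> \<nu>) \<pi> \<Pi> (mjustified (RCn f gs) l) \<longleftrightarrow>
    (\<exists>ns. length ns = ?k \<and> mso_holds \<rho> (birth \<circ> fun_upds \<nu> (aux_vars l ?k) ns) \<pi> \<Pi> ?body)"
    by (simp only: mjustified.simps holds_mex_gs length_aux_vars)
  also have "\<dots> \<longleftrightarrow> (\<exists>ns. length ns = ?k \<and>
    (\<forall>j<?k. (graph_rel (gs ! j) l, map \<nu> (arg_vars l) @ [ns ! j]) \<in> run_facts) \<and>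
    (graph_rel f ?k, ns @ [\<nu> 0]) \<in> run_facts)"
    using body by blast
  finally show ?thesis
    by simp
qed

lemma holds_mjustified:
  "mso_holds \<rho> (birth \<circ> \<nu>) \<pi> \<Pi> (mjustified g l) \<longleftrightarrow> justified run_facts g l (map \<nu> (arg_vars l)) (\<nu> 0)"
proof (cases g)
  case RZ
  then show ?thesis by (simp add: holds_mzero)
next
  case RS
  then show ?thesis by (auto simp: holds_msucc holds_mconnectives arg_vars_def)
next
  case (RId i)
  then show ?thesis by (auto simp: holds_meq holds_mconnectives arg_vars_def)
next
  case (RCn f gs)
  then show ?thesis by (simp only: holds_mjustified_RCn)
next
  case (RPr f g')
  show ?thesis
  proof (cases "0 < l")
    case False
    then show ?thesis using RPr by (simp add: holds_mconnectives)
  next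
    case True
    have args: "map (\<nu>(Suc 0 := m, 2 := z)) (tl (arg_vars l)) = tl (map \<nu> (arg_vars l))"
      "map \<nu> (tl (arg_vars l)) = tl (map \<nu> (arg_vars l))" for m z
      by (rule map_tl_arg_vars_cong; simp)+
    have "map \<nu> (arg_vars l) ! 0 = \<nu> 10"
      using True by simp
    then show ?thesis using RPr True
      by (simp add: holds_mconnectives holds_mzero holds_mfact holds_MExG holds_msucc args
          del: mso_holds.simps(8))
  qed
next
  case (RMn f)
  have args: "map (\<nu>(Suc 0 := m, 2 := z)) (arg_vars l) = map \<nu> (arg_vars l)"
    "map (\<nu>(2 := z)) (arg_vars l) = map \<nu> (arg_vars l)"
    "map (\<nu>(Suc 0 := m)) (arg_vars l) = map \<nu> (arg_vars l)" for m z
    by (rule map_arg_vars_cong; simp)+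
  show ?thesis using RMn
    by (simp add: holds_mconnectives holds_mzero holds_mfact holds_MExG holds_mall_g holds_mless args
        del: mso_holds.simps(8))
qed

lemma holds_mgraph_justified:
  "mso_holds \<rho> (birth \<circ> \<nu>) \<pi> \<Pi> (mgraph_justified g l) \<longleftrightarrow>
     (\<forall>xs y. length xs = l \<longrightarrow> (graph_rel g l, xs @ [y]) \<in> run_facts \<longrightarrow> justified run_facts g l xs y)"
proof -
  have out: "fun_upds (\<nu>(0 := y)) (arg_vars l) ns 0 = y" for y ns
    by (subst fun_upds_notin) (auto simp: set_arg_vars)
  have args: "map (fun_upds (\<nu>(0 := y)) (arg_vars l) ns) (arg_vars l) = ns" if "length ns = l" for y ns
    using that by (simp add: map_fun_upds)
  show ?thesis
    by (auto simp: mgraph_justified_def holds_mall_g holds_mall_gs holds_mconnectives holds_mfact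
        holds_mjustified out args simp del: mso_holds.simps(8))
qed

lemma holds_mall_justified:
  "mso_holds \<rho> (birth \<circ> \<nu>) \<pi> \<Pi> (mall_justified SL) \<longleftrightarrow> all_justified run_facts (set SL)"
  by (auto simp: mall_justified_def all_justified_def holds_mconj holds_mgraph_justified)

lemma holds_mdiag:
  "mso_holds \<rho> (birth \<circ> \<nu>) \<pi> \<Pi> (mdiag n m (mdiag_body SL t)) \<longleftrightarrow>
     \<not> (all_justified run_facts (set SL) \<and> (graph_rel t 2, [n, m, 1]) \<in> run_facts)"
  by (simp add: mdiag_def mdiag_body_def holds_MExG holds_mnumeral holds_meq holds_mall_justified
      holds_mzero holds_msucc holds_mfact del: mso_holds.simps(8))

end

lemma free_vars_mjustified:
  "mso_dfv (mjustified g l) \<subseteq> insert 0 (set (arg_vars l))"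
  "mso_pfv (mjustified g l) = {}" "mso_sfv (mjustified g l) = {}"
proof -
  have "set (tl (arg_vars l)) \<subseteq> set (arg_vars l)"
    by (cases "arg_vars l") auto
  moreover have "0 < l \<Longrightarrow> 10 \<in> set (arg_vars l)" "1 \<notin> set (arg_vars l)" "2 \<notin> set (arg_vars l)"
    by (auto simp: set_arg_vars)
  moreover have "set (arg_vars l) \<inter> set (aux_vars l k) = {}" for k
    by (auto simp: set_arg_vars set_aux_vars)
  ultimately show "mso_dfv (mjustified g l) \<subseteq> insert 0 (set (arg_vars l))"
    by (cases g) (auto simp: set_arg_vars set_aux_vars)
qed (cases g; auto)+

lemma mdiag_sentence: "mso_sentence (mdiag n m (mdiag_body SL t))"
proof -
  have "mso_dfv (mall_justified SL) = {}" "mso_pfv (mall_justified SL) = {}"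
    "mso_sfv (mall_justified SL) = {}"
    using free_vars_mjustified by (fastforce simp: mall_justified_def mgraph_justified_def)+
  then show ?thesis
    by (auto simp: mso_sentence_def mdiag_def mdiag_body_def)
qed

lemma holds_mdiag_sentence:
  assumes "numbered_run \<rho> birth"
  shows "mso_holds \<rho> \<xi> \<pi> \<Pi> (mdiag n m (mdiag_body SL t)) \<longleftrightarrow>
    \<not> (all_justified (numbered_run.run_facts \<rho> birth) (set SL) \<and>
       (graph_rel t 2, [n, m] @ [1]) \<in> numbered_run.run_facts \<rho> birth)"
proof -
  interpret numbered_run \<rho> birth by (fact assms)
  have "mso_dfv (mdiag n m (mdiag_body SL t)) = {}"
    using mdiag_sentence by (simp add: mso_sentence_def)
  then have "mso_holds \<rho> \<xi> \<pi> \<Pi> (mdiag n m (mdiag_body SL t)) \<longleftrightarrow>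
    mso_holds \<rho> (birth \<circ> (\<lambda>_. 0)) \<pi> \<Pi> (mdiag n m (mdiag_body SL t))"
    by (intro mso_holds_cong) simp
  then show ?thesis
    by (simp add: holds_mdiag)
qed

lemma mjustified_over:
  assumes "\<forall>(h, k)\<in>set (subprograms g l). (graph_rel h k, Suc k) \<in> set Sc"
  shows "mso_over Sc (mjustified g l)"
proof (cases g)
  case (RCn f gs)
  have "(graph_rel (gs ! j) l, Suc l) \<in> set Sc" if "j < length gs" for j
    using assms RCn subprograms_self[of "gs ! j" l] nth_mem[OF that] by fastforce
  moreover have "(graph_rel f (length gs), Suc (length gs)) \<in> set Sc"
    using assms RCn subprograms_self[of f "length gs"] by auto
  ultimately show ?thesis
    using RCn by simp
next
  case (RPr f g')
  have "(graph_rel f (l - 1), Suc (l - 1)) \<in> set Sc" "(graph_rel g' (Suc l), Suc (Suc l)) \<in> set Sc"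
    using assms RPr subprograms_self[of f "l - 1"] subprograms_self[of g' "Suc l"] by auto
  then show ?thesis
    using assms RPr by auto
next
  case (RMn f)
  then show ?thesis
    using assms subprograms_self[of f "Suc l"] by auto
qed auto

section \<open>A DMS that records graph facts\<close>

text \<open>A query with free variables \<open>us\<close> that always holds: well-formed actions need their
  parameters to be exactly the free variables of their query.\<close>
fun fol_mentions :: "nat list \<Rightarrow> fol" where
  "fol_mentions [] = FTrue"
| "fol_mentions (u # us) = FAnd (FEq u u) (fol_mentions us)"

lemma fol_holds_mentions: "fol_holds I \<sigma> (fol_mentions us)"
  by (induction us) auto

lemma fol_fv_mentions: "fol_fv (fol_mentions us) = set us"
  by (induction us) auto

lemma fol_over_mentions: "fol_over R (fol_mentions us)"
  by (induction us) auto

text \<open>Both actions create a fresh element (and record it in the unary clock relation \<open>0\<close>);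
  \<open>record_action (R, k)\<close> moreover records an arbitrary \<open>R\<close>-fact over existing elements.\<close>
definition tick_action :: action where
  "tick_action = Action [] [0] FTrue [] [(0, [0])]"

definition record_action :: "nat \<times> nat \<Rightarrow> action" where
  "record_action Rk = Action [1..<Suc (snd Rk)] [0] (fol_mentions [1..<Suc (snd Rk)]) []
     [(0, [0]), (fst Rk, [1..<Suc (snd Rk)])]"

definition graph_schema :: "(recf \<times> nat) list \<Rightarrow> schema" where
  "graph_schema SL = map (\<lambda>(g, l). (graph_rel g l, Suc l)) (remdups SL)"

definition graph_dms :: "(recf \<times> nat) list \<Rightarrow> dms" where
  "graph_dms SL = DMS ((0, 1) # graph_schema SL) [] (tick_action # map record_action (graph_schema SL))"

lemma wf_graph_dms: "wf_dms (graph_dms SL)"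
proof -
  let ?R = "(0, 1) # graph_schema SL"
  have "distinct (map fst (graph_schema SL))"
    unfolding graph_schema_def by (auto simp: distinct_map inj_on_def graph_rel_eq_iff)
  moreover have "0 \<notin> fst ` set (graph_schema SL)"
    by (auto simp: graph_schema_def)
  moreover have "wf_action ?R tick_action"
    by (auto simp: wf_action_def tick_action_def fact_over_def)
  moreover have "wf_action ?R (record_action (R, k))" if "(R, k) \<in> set (graph_schema SL)" for R k
  proof -
    have "fact_over ?R (R, [1..<Suc k])" "fact_over ?R (0, [0])"
      using that by (simp_all add: fact_over_def del: upt_Suc)
    then show ?thesis
      by (auto simp: wf_action_def record_action_def fol_fv_mentions fol_over_mentions)
  qed
  ultimately show ?thesis
    by (auto simp: wf_dms_def graph_dms_def)
qed

lemma subst_inst_simps [simp]: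
  "subst_inst \<sigma> [] = {}"
  "subst_inst \<sigma> (f # fs) = insert (fst f, map \<sigma> (snd f)) (subst_inst \<sigma> fs)"
  by (auto simp: subst_inst_def split: prod.splits)

lemma graph_dms_step_creates_one:
  assumes "dms_step (graph_dms SL) (I, H) (I', H')" and "adom I \<subseteq> H"
  shows "\<exists>e. e \<notin> H \<and> H' = insert e H \<and> adom I' = insert e (adom I)"
proof -
  from assms(1) obtain a \<sigma> where a: "a \<in> set (tick_action # map record_action (graph_schema SL))"
    and params: "\<forall>u\<in>set (a_params a). \<sigma> u \<in> adom I"
    and fresh: "\<forall>v\<in>set (a_fresh a). \<sigma> v \<notin> H"
    and I': "I' = (I - subst_inst \<sigma> (a_del a)) \<union> subst_inst \<sigma> (a_add a)"
    and H': "H' = H \<union> \<sigma> ` set (a_fresh a)"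
    unfolding dms_step_def graph_dms_def by auto
  from a consider "a = tick_action" | Rk where "a = record_action Rk"
    by auto
  then show ?thesis
  proof cases
    case 1
    then show ?thesis using fresh I' H' by (intro exI[of _ "\<sigma> 0"]) (auto simp: tick_action_def)
  next
    case 2
    then have "set (map \<sigma> [1..<Suc (snd Rk)]) \<subseteq> adom I"
      using params by (auto simp: record_action_def)
    then show ?thesis using fresh I' H' 2 by (intro exI[of _ "\<sigma> 0"]) (auto simp: record_action_def)
  qed
qed

lemma graph_dms_run_numbered:
  assumes "is_run (graph_dms SL) \<rho>"
  shows "\<exists>birth. numbered_run \<rho> birth"
proof -
  from assms obtain H where H0: "H 0 = {}" and \<rho>0: "\<rho> 0 = init_inst (graph_dms SL)"
    and step: "\<And>i. dms_step (graph_dms SL) (\<rho> i, H i) (\<rho> (Suc i), H (Suc i))"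
    unfolding is_run_def by blast
  have adom0: "adom (\<rho> 0) = {}"
    using \<rho>0 by (simp add: init_inst_def graph_dms_def)
  have "adom (\<rho> i) = H i" for i
  proof (induction i)
    case (Suc i)
    then show ?case using graph_dms_step_creates_one[OF step] by force
  qed (simp add: H0 adom0)
  then have "\<exists>e. e \<notin> adom (\<rho> i) \<and> adom (\<rho> (Suc i)) = insert e (adom (\<rho> i))" for i
    using graph_dms_step_creates_one[OF step] by force
  then show ?thesis
    by (rule numbered_runI[of \<rho>, OF adom0])
qed

text \<open>The run in which step \<open>j\<close> creates the element \<open>j\<close> and records the true graph fact coded
  by the first component of \<open>j\<close>, provided its values already exist. Since \<open>prod_encode (k, b) \<ge> b\<close>,
  every true graph fact is eventually recorded.\<close>
definition scheduled :: "nat \<Rightarrow> recf \<times> nat \<times> nat list \<times> nat" where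
  "scheduled j = from_nat (fst (prod_decode j))"

definition schedulable :: "(recf \<times> nat) list \<Rightarrow> nat \<Rightarrow> bool" where
  "schedulable SL j \<longleftrightarrow> (case scheduled j of (g, l, xs, y) \<Rightarrow>
     (g, l) \<in> set SL \<and> length xs = l \<and> rf_eval g xs y \<and> (\<forall>v\<in>set (xs @ [y]). v < j))"

definition scheduled_fact :: "(recf \<times> nat) list \<Rightarrow> nat \<Rightarrow> inst" where
  "scheduled_fact SL j =
     (if schedulable SL j then (case scheduled j of (g, l, xs, y) \<Rightarrow> {(graph_rel g l, xs @ [y])}) else {})"

definition canonical_run :: "(recf \<times> nat) list \<Rightarrow> nat \<Rightarrow> inst" where
  "canonical_run SL i = {(0, [e]) | e. e < i} \<union> (\<Union>j<i. scheduled_fact SL j)"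

lemma adom_canonical_run: "adom (canonical_run SL i) = {..<i}"
proof -
  have "adom (scheduled_fact SL j) \<subseteq> {..<j}" for j
    by (auto simp: scheduled_fact_def schedulable_def adom_def split: prod.splits if_splits)
  then have "adom (\<Union>j<i. scheduled_fact SL j) \<subseteq> {..<i}"
    by (fastforce simp: adom_UN)
  moreover have "adom {(0, [e]) | e. e < i} = {..<i}"
    by (auto simp: adom_def)
  ultimately show ?thesis
    by (auto simp: canonical_run_def)
qed

lemma canonical_run_Suc:
  "canonical_run SL (Suc i) = insert (0, [i]) (canonical_run SL i) \<union> scheduled_fact SL i"
  by (auto simp: canonical_run_def lessThan_Suc)

lemma map_shift: "map (\<lambda>k. if k = 0 then i else zs ! (k - 1)) [1..<Suc (length zs)] = zs"
  by (rule nth_equalityI) (auto simp del: upt_Suc)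

lemma canonical_run_step:
  "dms_step (graph_dms SL) (canonical_run SL i, {..<i}) (canonical_run SL (Suc i), {..<Suc i})"
proof (cases "schedulable SL i")
  case False
  then have "scheduled_fact SL i = {}"
    by (simp add: scheduled_fact_def)
  then show ?thesis unfolding dms_step_def
    by (intro bexI[of _ tick_action] exI[of _ "\<lambda>_. i"])
      (auto simp: tick_action_def canonical_run_Suc graph_dms_def)
next
  case True
  obtain g l xs y where sch: "scheduled i = (g, l, xs, y)"
    by (cases "scheduled i") auto
  with True have gl: "(g, l) \<in> set SL" and len: "length xs = l" and "rf_eval g xs y"
    and below: "\<forall>v\<in>set (xs @ [y]). v < i"
    by (auto simp: schedulable_def)
  have new: "scheduled_fact SL i = {(graph_rel g l, xs @ [y])}"
    using True sch by (simp add: scheduled_fact_def)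
  define \<sigma> where "\<sigma> = (\<lambda>k. if k = 0 then i else (xs @ [y]) ! (k - 1))"
  have args: "map \<sigma> [1..<Suc (Suc l)] = xs @ [y]"
    using map_shift[of i "xs @ [y]"] len by (simp add: \<sigma>_def del: upt_Suc)
  have "(graph_rel g l, Suc l) \<in> set (graph_schema SL)"
    using gl by (force simp: graph_schema_def)
  then have act: "record_action (graph_rel g l, Suc l) \<in> set (d_acts (graph_dms SL))"
    by (simp add: graph_dms_def)
  have params: "\<forall>u\<in>set [1..<Suc (Suc l)]. \<sigma> u \<in> adom (canonical_run SL i)"
    using below args[THEN arg_cong[where f = set]] by (auto simp: adom_canonical_run simp del: upt_Suc)
  have "\<sigma> 0 = i"
    by (simp add: \<sigma>_def)
  with params args show ?thesis unfolding dms_step_def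
    by (intro bexI[OF _ act] exI[of _ \<sigma>])
      (auto simp: record_action_def fol_holds_mentions canonical_run_Suc new simp del: upt_Suc)
qed

lemma is_run_canonical_run: "is_run (graph_dms SL) (canonical_run SL)"
proof -
  have "canonical_run SL 0 = init_inst (graph_dms SL)"
    by (simp add: canonical_run_def init_inst_def graph_dms_def)
  then show ?thesis
    unfolding is_run_def using canonical_run_step[of SL] by (intro exI[of _ "\<lambda>i. {..<i}"]) auto
qed

lemma numbered_canonical_run: "numbered_run (canonical_run SL) id"
  by unfold_locales (auto simp: adom_canonical_run)

lemma snd_le_prod_encode: "b \<le> prod_encode (a, b)"
proof -
  have "n \<le> triangle n" for n
    by (induction n) auto
  from this[of "a + b"] show ?thesis
    by (simp add: prod_encode_def)
qed

lemma canonical_run_graph_facts: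
  assumes "length xs = l"
  shows "(graph_rel g l, xs @ [y]) \<in> numbered_run.run_facts (canonical_run SL) id \<longleftrightarrow>
    (g, l) \<in> set SL \<and> rf_eval g xs y"
proof
  assume "(graph_rel g l, xs @ [y]) \<in> numbered_run.run_facts (canonical_run SL) id"
  then obtain j where "(graph_rel g l, xs @ [y]) \<in> scheduled_fact SL j"
    by (auto simp: numbered_run.run_facts_def[OF numbered_canonical_run] canonical_run_def)
  then obtain g' l' xs' y' where "scheduled j = (g', l', xs', y')" "schedulable SL j"
    and "(graph_rel g l, xs @ [y]) = (graph_rel g' l', xs' @ [y'])"
    by (auto simp: scheduled_fact_def split: if_splits prod.splits)
  then show "(g, l) \<in> set SL \<and> rf_eval g xs y"
    by (auto simp: schedulable_def graph_rel_eq_iff)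
next
  assume true: "(g, l) \<in> set SL \<and> rf_eval g xs y"
  define j where "j = prod_encode (to_nat (g, l, xs, y), Suc (Max (set (xs @ [y]))))"
  have "Suc (Max (set (xs @ [y]))) \<le> j"
    unfolding j_def by (rule snd_le_prod_encode)
  then have "\<forall>v\<in>set (xs @ [y]). v < j"
    by (metis List.finite_set Max_ge le_imp_less_Suc less_le_trans)
  moreover have "scheduled j = (g, l, xs, y)"
    by (simp add: scheduled_def j_def)
  ultimately have "scheduled_fact SL j = {(graph_rel g l, xs @ [y])}"
    using true assms by (simp add: scheduled_fact_def schedulable_def)
  then have "(graph_rel g l, xs @ [y]) \<in> canonical_run SL (Suc j)"
    by (auto simp: canonical_run_def)
  then show "(graph_rel g l, xs @ [y]) \<in> numbered_run.run_facts (canonical_run SL) id"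
    by (auto simp: numbered_run.run_facts_def[OF numbered_canonical_run])
qed

lemma all_justified_canonical_run:
  assumes closed: "\<And>g l. (g, l) \<in> set SL \<Longrightarrow> set (subprograms g l) \<subseteq> set SL"
  shows "all_justified (numbered_run.run_facts (canonical_run SL) id) (set SL)"
proof -
  let ?V = "numbered_run.run_facts (canonical_run SL) id"
  have "true_graphs (set SL) \<subseteq> ?V"
    by (auto simp: true_graphs_def canonical_run_graph_facts)
  then have "justified ?V g l xs y"
    if "(g, l) \<in> set SL" "length xs = l" "rf_eval g xs y" for g l xs y
    using justified_mono justified_true_graphs[OF closed[OF that(1)] that(2,3)] by blast
  then show ?thesis
    by (auto simp: all_justified_def canonical_run_graph_facts)
qed

section \<open>The code of the diagonal sentence is computable\<close>

definition enc_mnumeral_step :: "nat \<Rightarrow> nat" where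
  "enc_mnumeral_step e = prod_encode (7, prod_encode (1, prod_encode (4, prod_encode (enc_mso (msucc 1 0),
     prod_encode (7, prod_encode (0, prod_encode (4, prod_encode (enc_mso (meq 0 1), e))))))))"

lemma enc_mnumeral_Suc: "enc_mso (mnumeral (Suc k)) = enc_mnumeral_step (enc_mso (mnumeral k))"
  by (simp add: enc_mnumeral_step_def)

definition rnumeral_step :: recf where
  "rnumeral_step = rpair (rconst 7) (rpair (rconst 1) (rpair (rconst 4) (rpair (rconst (enc_mso (msucc 1 0)))
     (rpair (rconst 7) (rpair (rconst 0) (rpair (rconst 4) (rpair (rconst (enc_mso (meq 0 1))) (RId 0))))))))"

lemma rf_eval_rnumeral_step: "rf_eval rnumeral_step [e] (enc_mnumeral_step e)"
  unfolding rnumeral_step_def enc_mnumeral_step_def by (intro rf_eval_rpair rf_eval_rconst rf_eval_RId0)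

definition rnumeral :: recf where
  "rnumeral = RPr (rconst (enc_mso (mnumeral 0))) (RCn rnumeral_step [RId 0])"

lemma rf_eval_rnumeral: "rf_eval rnumeral [k] (enc_mso (mnumeral k))"
proof (induction k)
  case 0
  show ?case
    unfolding rnumeral_def by (rule rf_eval.pr0[OF rf_eval_rconst])
next
  case (Suc k)
  have "rf_eval (RCn rnumeral_step [RId 0]) [enc_mso (mnumeral k), k] (enc_mso (mnumeral (Suc k)))"
    unfolding enc_mnumeral_Suc by (rule rf_eval_RCn1[OF rf_eval_RId0 rf_eval_rnumeral_step])
  with Suc show ?case
    unfolding rnumeral_def by (rule rf_eval.prS)
qed

definition enc_mdiag :: "nat \<Rightarrow> nat \<Rightarrow> nat \<Rightarrow> nat" where
  "enc_mdiag n m a = prod_encode (3, prod_encode (7, prod_encode (0, prod_encode (4,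
     prod_encode (enc_mso (mnumeral n), prod_encode (7, prod_encode (1, prod_encode (4,
     prod_encode (prod_encode (7, prod_encode (0, prod_encode (4,
       prod_encode (enc_mso (meq 0 1), enc_mso (mnumeral m))))), a)))))))))"

lemma enc_mso_mdiag: "enc_mso (mdiag n m A) = enc_mdiag n m (enc_mso A)"
  by (simp add: mdiag_def enc_mdiag_def)

text \<open>The code of the input \<open>(D, mdiag n m A)\<close> when \<open>m\<close> is the code of \<open>D\<close> and \<open>n\<close> is the code
  of \<open>A\<close>.\<close>
definition diag_code :: "nat \<Rightarrow> nat \<Rightarrow> nat" where
  "diag_code n m = prod_encode (m, enc_mdiag n m n)"

lemma enc_input_mdiag_self: "enc_input (D, mdiag (enc_mso A) (enc_dms D) A) = diag_code (enc_mso A) (enc_dms D)"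
  by (simp add: enc_input_def diag_code_def enc_mso_mdiag)

definition rdiag_code :: recf where
  "rdiag_code = rpair (RId 1) (rpair (rconst 3) (rpair (rconst 7) (rpair (rconst 0) (rpair (rconst 4)
     (rpair (RCn rnumeral [RId 0]) (rpair (rconst 7) (rpair (rconst 1) (rpair (rconst 4)
     (rpair (rpair (rconst 7) (rpair (rconst 0) (rpair (rconst 4)
       (rpair (rconst (enc_mso (meq 0 1))) (RCn rnumeral [RId 1]))))) (RId 0))))))))))"

lemma rf_eval_rdiag_code: "rf_eval rdiag_code [n, m] (diag_code n m)"
proof -
  have "rf_eval (RCn rnumeral [RId 0]) [n, m] (enc_mso (mnumeral n))"
    "rf_eval (RCn rnumeral [RId 1]) [n, m] (enc_mso (mnumeral m))"
    by (rule rf_eval_RCn1[OF rf_eval_RId0 rf_eval_rnumeral] rf_eval_RCn1[OF rf_eval_RId1 rf_eval_rnumeral])+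
  then show ?thesis
    unfolding rdiag_code_def diag_code_def enc_mdiag_def
    by (intro rf_eval_rpair rf_eval_rconst rf_eval_RId0 rf_eval_RId1)
qed

section \<open>The diagonal argument\<close>

definition diag_input :: "recf \<Rightarrow> nat \<Rightarrow> nat \<Rightarrow> dms \<times> mso" where
  "diag_input t n m = (graph_dms (subprograms t 2), mdiag n m (mdiag_body (subprograms t 2) t))"

lemma mc_input_diag_input: "mc_input (diag_input t n m)"
proof -
  let ?SL = "subprograms t 2"
  let ?Sc = "d_schema (graph_dms ?SL)"
  have in_schema: "(graph_rel g l, Suc l) \<in> set ?Sc" if "(g, l) \<in> set ?SL" for g l
    using that by (force simp: graph_dms_def graph_schema_def)
  have "mso_over ?Sc (mjustified g l)" if "(g, l) \<in> set ?SL" for g l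
    using that subprograms_trans in_schema by (blast intro: mjustified_over)
  then have "mso_over ?Sc (mall_justified ?SL)"
    using in_schema by (auto simp: mall_justified_def mgraph_justified_def)
  moreover have "(graph_rel t 2, 3) \<in> set ?Sc"
    using in_schema[OF subprograms_self] by (simp add: numeral_3_eq_3)
  ultimately have "mso_over ?Sc (mdiag n m (mdiag_body ?SL t))"
    by (simp add: mdiag_def mdiag_body_def numeral_3_eq_3)
  then show ?thesis
    by (simp add: mc_input_def diag_input_def wf_graph_dms mdiag_sentence)
qed

text \<open>Justified facts are true, and the canonical run records exactly the true facts.\<close>
lemma mc_yes_diag_input: "mc_yes (diag_input t n m) \<longleftrightarrow> \<not> rf_eval t [n, m] 1"
proof
  let ?SL = "subprograms t 2"
  assume "mc_yes (diag_input t n m)"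
  then have "mso_holds (canonical_run ?SL) (\<lambda>_. 0) (\<lambda>_. 0) (\<lambda>_. {}) (mdiag n m (mdiag_body ?SL t))"
    using is_run_canonical_run by (simp add: mc_yes_def diag_input_def)
  moreover have "all_justified (numbered_run.run_facts (canonical_run ?SL) id) (set ?SL)"
    using subprograms_trans by (blast intro: all_justified_canonical_run)
  ultimately have "(graph_rel t 2, [n, m] @ [1]) \<notin> numbered_run.run_facts (canonical_run ?SL) id"
    by (simp add: holds_mdiag_sentence[OF numbered_canonical_run])
  then show "\<not> rf_eval t [n, m] 1"
    using canonical_run_graph_facts[of "[n, m]" 2 t 1] subprograms_self[of t 2] by simp
next
  let ?SL = "subprograms t 2"
  assume no: "\<not> rf_eval t [n, m] 1"
  have "mso_holds \<rho> (\<lambda>_. 0) (\<lambda>_. 0) (\<lambda>_. {}) (mdiag n m (mdiag_body ?SL t))"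
    if "is_run (graph_dms ?SL) \<rho>" for \<rho>
  proof -
    from graph_dms_run_numbered[OF that] obtain birth where run: "numbered_run \<rho> birth"
      by blast
    show ?thesis
      using all_justified_graph_sound[of "numbered_run.run_facts \<rho> birth" "set ?SL" t 2]
        graph_soundD[of _ t 2 "[n, m]" 1] no
      by (auto simp: holds_mdiag_sentence[OF run])
  qed
  then show "mc_yes (diag_input t n m)"
    by (simp add: mc_yes_def diag_input_def)
qed

theorem theorem4p1:
  shows "\<not> decidable_on mc_input mc_yes enc_input"
proof
  assume "decidable_on mc_input mc_yes enc_input"
  then obtain r where r: "\<And>x. mc_input x \<Longrightarrow> rf_eval r [enc_input x] (if mc_yes x then 1 else 0)"
    unfolding decidable_on_def by blast
  define t where "t = RCn r [rdiag_code]"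
  define K where "K = enc_mso (mdiag_body (subprograms t 2) t)"
  define M where "M = enc_dms (graph_dms (subprograms t 2))"
  have "enc_input (diag_input t K M) = diag_code K M"
    unfolding diag_input_def K_def M_def by (rule enc_input_mdiag_self)
  then have "rf_eval t [K, M] v \<longleftrightarrow> rf_eval r [enc_input (diag_input t K M)] v" for v
    unfolding t_def by (simp add: rf_eval_RCn1_iff[OF rf_eval_rdiag_code])
  with r[OF mc_input_diag_input] have "rf_eval t [K, M] (if mc_yes (diag_input t K M) then 1 else 0)"
    by blast
  then show False
    using mc_yes_diag_input rf_eval_deterministic by (metis zero_neq_one)
qed

end
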